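(* Let $K\ge 2$ arms be given. Suppose arm $i$ has been sampled $n_i\ge1$ times with observed sample mean $x_i\in[0,1]$ (fixed numbers); let $\alpha$ satisfy $x_\alpha=\max_j x_j$ and $\beta\ne\alpha$ satisfy $x_\beta=\max_{j\ne\alpha}x_j$; let $N\ge1$. For each arm $i$, let $Y_i$ be the average of $N$ independent identically distributed random variables with values in $[0,1]$ and mean $x_i$, and set $X_i'=\frac{n_i x_i+NY_i}{n_i+N}$. With $$\Lambda_\alpha^b=\mathbb E\big[(x_\beta-X_\alpha')\,\mathbf 1\{X_\alpha'\le x_\beta\}\big],\qquad \Lambda_i^b=\mathbb E\big[(X_i'-x_\alpha)\,\mathbf 1\{X_i'\ge x_\alpha\}\big]\ (i\ne\alpha),$$ one has $$\Lambda_\alpha^b\le \frac{2N x_\beta}{n_\alpha}\exp\!\big(-1.37\,(x_\alpha-x_\beta)^2 n_\alpha\big),$$ and for every $i\ne\alpha$, $$\Lambda_i^b\le \frac{2N(1-x_\alpha)}{n_i}\exp\!\big(-1.37\,(x_\alpha-x_i)^2 n_i\big).$$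
   Context: $\Lambda_i^b$ is the (budget-based) intrinsic value of information of pulling arm $i$ for the whole remaining budget of $N$ samples, measured with sample means. In this statement the future samples of each arm are modeled as having mean equal to the arm's current sample mean. *)

theory Defs
  imports "HOL-Probability.Probability"
begin

definition iid_unit_mean :: "'a measure \<Rightarrow> (nat \<Rightarrow> 'a \<Rightarrow> real) \<Rightarrow> nat \<Rightarrow> real \<Rightarrow> bool" where
  "iid_unit_mean M Z N m \<longleftrightarrow>
     prob_space M \<and>
     (\<forall>k<N. Z k \<in> borel_measurable M) \<and>
     prob_space.indep_vars M (\<lambda>_. borel) Z {..<N} \<and>
     (\<forall>k<N. distr M borel (Z k) = distr M borel (Z 0)) \<and>
     (\<forall>k<N. \<forall>\<omega>\<in>space M. Z k \<omega> \<in> {0..1}) \<and>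
     (\<forall>k<N. integral\<^sup>L M (Z k) = m)"

definition sample_avg :: "(nat \<Rightarrow> 'a \<Rightarrow> real) \<Rightarrow> nat \<Rightarrow> 'a \<Rightarrow> real" where
  "sample_avg Z N \<omega> = (\<Sum>k<N. Z k \<omega>) / real N"

definition updated_mean :: "nat \<Rightarrow> real \<Rightarrow> (nat \<Rightarrow> 'a \<Rightarrow> real) \<Rightarrow> nat \<Rightarrow> 'a \<Rightarrow> real" where
  "updated_mean n x Z N \<omega> = (real n * x + real N * sample_avg Z N \<omega>) / (real n + real N)"

definition Lambda_best :: "'a measure \<Rightarrow> nat \<Rightarrow> real \<Rightarrow> (nat \<Rightarrow> 'a \<Rightarrow> real) \<Rightarrow> nat \<Rightarrow> real \<Rightarrow> real" where
  "Lambda_best M n x Z N xbeta =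
     integral\<^sup>L M (\<lambda>\<omega>. (xbeta - updated_mean n x Z N \<omega>) *
        (if updated_mean n x Z N \<omega> \<le> xbeta then 1 else 0))"

definition Lambda_other :: "'a measure \<Rightarrow> nat \<Rightarrow> real \<Rightarrow> (nat \<Rightarrow> 'a \<Rightarrow> real) \<Rightarrow> nat \<Rightarrow> real \<Rightarrow> real" where
  "Lambda_other M n x Z N xalpha =
     integral\<^sup>L M (\<lambda>\<omega>. (updated_mean n x Z N \<omega> - xalpha) *
        (if updated_mean n x Z N \<omega> \<ge> xalpha then 1 else 0))"

end

theory Submission
  imports Defs
begin

(* Write X' = (n x + S) / (n + N) for the updated mean of an arm with prior sample mean x
   after N further samples whose sum is S \<in> [0, N].  For a non-best arm i with threshold
   x_alpha \<ge> x_i the argument has three ingredients: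
     (1) deterministically, the overshoot X' - x_alpha is at most N (1 - x_alpha) / (n + N),
         since S \<le> N;
     (2) the event X' \<ge> x_alpha says S exceeds its mean N x_i by (n + N)(x_alpha - x_i), so
         Hoeffding's inequality bounds its probability by exp (-2 (n+N)^2 (x_alpha-x_i)^2 / N),
         which is at most exp (-1.37 (x_alpha - x_i)^2 n);
     (3) hence Lambda^b_i \<le> N (1 - x_alpha) / n \<cdot> exp (-1.37 (x_alpha - x_i)^2 n).
   The best arm alpha is reduced to this case by symmetry: replacing every reward Z by 1 - Z
   turns Lambda^b_alpha (threshold x_beta) into the value of information of a non-best arm
   with sample mean 1 - x_alpha and threshold 1 - x_beta.  The corollary then follows, the
   factor 2 of the stated bounds being slack. *)

lemma updated_mean_eq:
  "updated_mean n x Z N \<omega> = (real n * x + (\<Sum>k<N. Z k \<omega>)) / (real n + real N)"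
  unfolding updated_mean_def sample_avg_def by (cases "N = 0") auto

lemma updated_mean_measurable [measurable]:
  assumes "\<And>k. k < N \<Longrightarrow> Z k \<in> borel_measurable M"
  shows "updated_mean n x Z N \<in> borel_measurable M"
  unfolding updated_mean_eq[abs_def] using assms by measurable

lemma updated_mean_ge_iff:
  fixes n N s x a :: real
  assumes "n + N > 0"
  shows "a \<le> (n * x + s) / (n + N) \<longleftrightarrow> N * x + (n + N) * (a - x) \<le> s"
  using assms by (simp add: le_divide_eq algebra_simps)

lemma updated_mean_overshoot:
  fixes n N s x a :: real
  assumes "n \<ge> 0" "n + N > 0" "s \<le> N" "x \<le> a"
  shows "(n * x + s) / (n + N) - a \<le> N * (1 - a) / (n + N)"
proof -
  have "n * x \<le> n * a" using assms by (intro mult_left_mono) auto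
  then have "n * x + s - (n + N) * a \<le> N * (1 - a)" using assms by (simp add: algebra_simps)
  moreover have "(n * x + s) / (n + N) - a = (n * x + s - (n + N) * a) / (n + N)"
    using assms by (simp add: field_simps)
  ultimately show ?thesis using assms by (simp add: divide_right_mono)
qed

lemma iid_unit_mean_reflect:
  assumes "iid_unit_mean M Z N m"
  shows "iid_unit_mean M (\<lambda>k \<omega>. 1 - Z k \<omega>) N (1 - m)"
proof -
  from assms have ps: "prob_space M"
    and meas: "\<And>k. k < N \<Longrightarrow> Z k \<in> borel_measurable M"
    and indep: "prob_space.indep_vars M (\<lambda>_. borel) Z {..<N}"
    and same_distr: "\<And>k. k < N \<Longrightarrow> distr M borel (Z k) = distr M borel (Z 0)"
    and unit: "\<And>k \<omega>. k < N \<Longrightarrow> \<omega> \<in> space M \<Longrightarrow> Z k \<omega> \<in> {0..1}"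
    and mean: "\<And>k. k < N \<Longrightarrow> integral\<^sup>L M (Z k) = m"
    unfolding iid_unit_mean_def by blast+
  interpret prob_space M by (rule ps)
  have "indep_vars (\<lambda>_. borel) (\<lambda>k \<omega>. 1 - Z k \<omega>) {..<N}"
    using indep by (rule indep_vars_compose2) simp
  moreover have "distr M borel (\<lambda>\<omega>. 1 - Z k \<omega>) = distr M borel (\<lambda>\<omega>. 1 - Z 0 \<omega>)"
    if k: "k < N" for k
  proof -
    have "distr M borel (\<lambda>\<omega>. 1 - Z k \<omega>) = distr (distr M borel (Z k)) borel (\<lambda>y. 1 - y)"
      using meas[OF k] by (subst distr_distr) (auto simp: comp_def)
    also have "\<dots> = distr (distr M borel (Z 0)) borel (\<lambda>y. 1 - y)"
      by (simp only: same_distr[OF k])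
    also have "\<dots> = distr M borel (\<lambda>\<omega>. 1 - Z 0 \<omega>)"
      using meas k by (subst distr_distr) (auto simp: comp_def)
    finally show ?thesis .
  qed
  moreover have "integral\<^sup>L M (\<lambda>\<omega>. 1 - Z k \<omega>) = 1 - m" if k: "k < N" for k
  proof -
    have "integrable M (Z k)"
      using unit[OF k] by (intro integrable_const_bound[where B=1] AE_I2 meas[OF k]) auto
    then show ?thesis using mean[OF k] by (simp add: prob_space)
  qed
  moreover have "(\<lambda>\<omega>. 1 - Z k \<omega>) \<in> borel_measurable M" if "k < N" for k
    using meas[OF that] by simp
  moreover have "1 - Z k \<omega> \<in> {0..1}" if "k < N" "\<omega> \<in> space M" for k \<omega>
    using unit[OF that] by simp
  ultimately show ?thesis
    using ps unfolding iid_unit_mean_def by blast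
qed

lemma updated_mean_reflect:
  assumes "n + N > 0"
  shows "updated_mean n (1 - x) (\<lambda>k \<omega>. 1 - Z k \<omega>) N \<omega> = 1 - updated_mean n x Z N \<omega>"
proof -
  have sum_reflect: "(\<Sum>k<N. 1 - Z k \<omega>) = real N - (\<Sum>k<N. Z k \<omega>)"
    by (simp add: sum_subtractf)
  have "real n + real N > 0" using assms by (metis of_nat_add of_nat_0_less_iff)
  then show ?thesis
    unfolding updated_mean_eq sum_reflect by (simp add: field_simps)
qed

lemma Lambda_best_reflect:
  assumes "n + N > 0"
  shows "Lambda_best M n x Z N b = Lambda_other M n (1 - x) (\<lambda>k \<omega>. 1 - Z k \<omega>) N (1 - b)"
  unfolding Lambda_best_def Lambda_other_def updated_mean_reflect[OF assms] by simp

lemma sum_upper_tail: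
  fixes Z :: "nat \<Rightarrow> 'a \<Rightarrow> real"
  assumes iid: "iid_unit_mean M Z N m" and N: "N \<ge> 1" and \<epsilon>: "\<epsilon> \<ge> 0"
  shows "measure M {\<omega>\<in>space M. real N * m + \<epsilon> \<le> (\<Sum>k<N. Z k \<omega>)} \<le> exp (-2 * \<epsilon>\<^sup>2 / real N)"
proof -
  note d = iid[unfolded iid_unit_mean_def]
  interpret prob_space M using d by auto
  interpret Hoeffding_ineq M "{..<N}" Z "\<lambda>_. 0" "\<lambda>_. 1" "real N * m"
  proof unfold_locales
    show "indep_vars (\<lambda>_. borel) Z {..<N}" using d by auto
    show "AE \<omega> in M. Z i \<omega> \<in> {0..1}" if "i \<in> {..<N}" for i
      using d that by (intro AE_I2) auto
    show "real N * m \<equiv> (\<Sum>i<N. expectation (Z i))" using d by simp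
  qed simp
  show ?thesis using Hoeffding_ineq_ge[OF \<epsilon>] N by simp
qed

(* Relaxing the Hoeffding exponent to the form used in the paper, using n N \<le> (n + N)^2. *)
lemma hoeffding_exponent_relax:
  fixes n N :: nat and d :: real
  assumes "N \<ge> 1"
  shows "exp (-2 * ((real n + real N) * d)\<^sup>2 / real N) \<le> exp (- (137/100) * d\<^sup>2 * real n)"
proof -
  have "real n * real N \<le> (real n + real N)\<^sup>2"
    by (simp add: power2_eq_square algebra_simps)
  have "(137/100) * d\<^sup>2 * real n * real N \<le> 2 * d\<^sup>2 * (real n * real N)"
    by (simp add: mult_right_mono)
  also have "\<dots> \<le> 2 * d\<^sup>2 * (real n + real N)\<^sup>2"
    using \<open>real n * real N \<le> (real n + real N)\<^sup>2\<close> by (intro mult_left_mono) auto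
  also have "\<dots> = 2 * ((real n + real N) * d)\<^sup>2"
    by (simp add: power_mult_distrib)
  finally show ?thesis using assms by (simp add: pos_le_divide_eq)
qed

lemma prob_updated_mean_ge:
  assumes iid: "iid_unit_mean M Z N x" and N: "N \<ge> 1" and gap: "x \<le> a"
  shows "measure M {\<omega>\<in>space M. a \<le> updated_mean n x Z N \<omega>}
           \<le> exp (- (137/100) * (a - x)\<^sup>2 * real n)"
proof -
  have "{\<omega>\<in>space M. a \<le> updated_mean n x Z N \<omega>}
      = {\<omega>\<in>space M. real N * x + (real n + real N) * (a - x) \<le> (\<Sum>k<N. Z k \<omega>)}"
    using N by (simp add: updated_mean_eq updated_mean_ge_iff)
  also have "measure M \<dots> \<le> exp (-2 * ((real n + real N) * (a - x))\<^sup>2 / real N)"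
    using gap by (intro sum_upper_tail[OF iid N]) simp
  also have "\<dots> \<le> exp (- (137/100) * (a - x)\<^sup>2 * real n)"
    using N by (rule hoeffding_exponent_relax)
  finally show ?thesis .
qed

lemma integral_le_const_times_measure:
  fixes f :: "'a \<Rightarrow> real"
  assumes "finite_measure M" "E \<in> sets M" "c \<ge> 0"
    and "\<And>\<omega>. \<omega> \<in> space M \<Longrightarrow> f \<omega> \<le> c * indicator E \<omega>"
  shows "integral\<^sup>L M f \<le> c * measure M E"
proof -
  interpret finite_measure M by (rule assms(1))
  have "integral\<^sup>L M f \<le> integral\<^sup>L M (\<lambda>\<omega>. c * indicator E \<omega>)"
    using assms by (intro integral_mono' integrable_mult_right integrable_real_indicator)
      (auto simp: emeasure_eq_measure)
  then show ?thesis using assms(2) by simp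
qed

lemma Lambda_other_bound:
  assumes iid: "iid_unit_mean M Z N x" and N: "N \<ge> 1" and n: "n \<ge> 1"
    and gap: "x \<le> a" "a \<le> 1"
  shows "Lambda_other M n x Z N a \<le> real N * (1 - a) / real n * exp (- (137/100) * (a - x)\<^sup>2 * real n)"
proof -
  from iid have ps: "prob_space M"
    and meas: "\<And>k. k < N \<Longrightarrow> Z k \<in> borel_measurable M"
    and unit: "\<And>k \<omega>. k < N \<Longrightarrow> \<omega> \<in> space M \<Longrightarrow> Z k \<omega> \<in> {0..1}"
    unfolding iid_unit_mean_def by blast+
  interpret prob_space M by (rule ps)
  define E where "E = {\<omega>\<in>space M. a \<le> updated_mean n x Z N \<omega>}"
  define c where "c = real N * (1 - a) / (real n + real N)"
  have E: "E \<in> sets M" unfolding E_def using meas by measurable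
  have c: "c \<ge> 0" unfolding c_def using gap by simp
  have "(updated_mean n x Z N \<omega> - a) * (if updated_mean n x Z N \<omega> \<ge> a then 1 else 0)
          \<le> c * indicator E \<omega>" if \<omega>: "\<omega> \<in> space M" for \<omega>
  proof -
    have "(\<Sum>k<N. Z k \<omega>) \<le> real N"
      using sum_mono[of "{..<N}" "\<lambda>k. Z k \<omega>" "\<lambda>_. 1"] unit[OF _ \<omega>] by simp
    then have "updated_mean n x Z N \<omega> - a \<le> c"
      unfolding updated_mean_eq c_def using N gap by (intro updated_mean_overshoot) auto
    then show ?thesis using c \<omega> by (auto simp: E_def indicator_def)
  qed
  then have "Lambda_other M n x Z N a \<le> c * measure M E"
    unfolding Lambda_other_def by (intro integral_le_const_times_measure E c) unfold_locales
  also have "\<dots> \<le> real N * (1 - a) / real n * exp (- (137/100) * (a - x)\<^sup>2 * real n)"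
  proof (rule mult_mono)
    show "c \<le> real N * (1 - a) / real n"
      unfolding c_def using n gap by (intro divide_left_mono) auto
    show "measure M E \<le> exp (- (137/100) * (a - x)\<^sup>2 * real n)"
      unfolding E_def using iid N gap(1) by (rule prob_updated_mean_ge)
  qed (use gap in auto)
  finally show ?thesis .
qed

lemma Lambda_best_bound:
  assumes iid: "iid_unit_mean M Z N x" and N: "N \<ge> 1" and n: "n \<ge> 1"
    and gap: "0 \<le> b" "b \<le> x"
  shows "Lambda_best M n x Z N b \<le> real N * b / real n * exp (- (137/100) * (x - b)\<^sup>2 * real n)"
proof -
  have "Lambda_best M n x Z N b = Lambda_other M n (1 - x) (\<lambda>k \<omega>. 1 - Z k \<omega>) N (1 - b)"
    using N by (intro Lambda_best_reflect) simp
  also have "\<dots> \<le> real N * (1 - (1 - b)) / real n * exp (- (137/100) * ((1 - b) - (1 - x))\<^sup>2 * real n)"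
    using gap by (intro Lambda_other_bound iid_unit_mean_reflect iid N n) auto
  finally show ?thesis by simp
qed

theorem corollary1:
  fixes K N :: nat and n :: "nat \<Rightarrow> nat" and x :: "nat \<Rightarrow> real"
    and \<alpha> \<beta> :: nat and M :: "'a measure" and Z :: "nat \<Rightarrow> nat \<Rightarrow> 'a \<Rightarrow> real"
  assumes K: "K \<ge> 2"
    and n_pos: "\<forall>i<K. n i \<ge> 1"
    and x_unit: "\<forall>i<K. x i \<in> {0..1}"
    and alpha: "\<alpha> < K" "\<forall>j<K. x j \<le> x \<alpha>"
    and beta: "\<beta> < K" "\<beta> \<noteq> \<alpha>" "\<forall>j<K. j \<noteq> \<alpha> \<longrightarrow> x j \<le> x \<beta>"
    and N: "N \<ge> 1"
    and iid: "\<forall>i<K. iid_unit_mean M (Z i) N (x i)"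
  shows "Lambda_best M (n \<alpha>) (x \<alpha>) (Z \<alpha>) N (x \<beta>)
           \<le> 2 * real N * x \<beta> / real (n \<alpha>) * exp (- (137/100) * (x \<alpha> - x \<beta>)^2 * real (n \<alpha>))
       \<and> (\<forall>i<K. i \<noteq> \<alpha> \<longrightarrow>
           Lambda_other M (n i) (x i) (Z i) N (x \<alpha>)
           \<le> 2 * real N * (1 - x \<alpha>) / real (n i) * exp (- (137/100) * (x \<alpha> - x i)^2 * real (n i)))"
proof (intro conjI allI impI)
  have "0 \<le> x \<beta>" "x \<beta> \<le> x \<alpha>" using beta x_unit alpha by auto
  then have "Lambda_best M (n \<alpha>) (x \<alpha>) (Z \<alpha>) N (x \<beta>)
          \<le> real N * x \<beta> / real (n \<alpha>) * exp (- (137/100) * (x \<alpha> - x \<beta>)^2 * real (n \<alpha>))"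
    using alpha n_pos iid N by (intro Lambda_best_bound) auto
  also have "\<dots> \<le> 2 * real N * x \<beta> / real (n \<alpha>) * exp (- (137/100) * (x \<alpha> - x \<beta>)^2 * real (n \<alpha>))"
    using \<open>0 \<le> x \<beta>\<close> by (intro mult_right_mono divide_right_mono) auto
  finally show "Lambda_best M (n \<alpha>) (x \<alpha>) (Z \<alpha>) N (x \<beta>)
           \<le> 2 * real N * x \<beta> / real (n \<alpha>) * exp (- (137/100) * (x \<alpha> - x \<beta>)^2 * real (n \<alpha>))" .
next
  fix i assume i: "i < K" "i \<noteq> \<alpha>"
  have "x i \<le> x \<alpha>" "x \<alpha> \<le> 1" using i alpha x_unit by auto
  then have "Lambda_other M (n i) (x i) (Z i) N (x \<alpha>)
          \<le> real N * (1 - x \<alpha>) / real (n i) * exp (- (137/100) * (x \<alpha> - x i)^2 * real (n i))"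
    using i n_pos iid N by (intro Lambda_other_bound) auto
  also have "\<dots> \<le> 2 * real N * (1 - x \<alpha>) / real (n i) * exp (- (137/100) * (x \<alpha> - x i)^2 * real (n i))"
    using \<open>x \<alpha> \<le> 1\<close> by (intro mult_right_mono divide_right_mono) auto
  finally show "Lambda_other M (n i) (x i) (Z i) N (x \<alpha>)
           \<le> 2 * real N * (1 - x \<alpha>) / real (n i) * exp (- (137/100) * (x \<alpha> - x i)^2 * real (n i))" .
qed

end
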